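(* Let $\alpha,\beta,r,x$ be real numbers and $\lambda$ a positive integer. For all nonnegative integers $n$, $$A_{n}^{\lambda,x}(\alpha,\beta,r)=\frac{(-1)^{n}}{\Gamma(\lambda)}\int_{0}^{\infty}z^{\lambda-1}S_{n}(-\beta xz;\alpha,-\beta,-r)\,e^{-z}\,dz,$$ where $\Gamma$ is the gamma function.
   Context: For a number $t$ and $\alpha$, the generalised factorial is $(t|\alpha)_n=\prod_{j=0}^{n-1}(t-j\alpha)$ for $n\ge 1$ and $(t|\alpha)_0=1$. For parameters $\alpha,\beta,\gamma$, the generalised Stirling numbers $S(n,k,\alpha,\beta,\gamma)$ ($0\le k\le n$) are defined by the polynomial identity $(t|\alpha)_n=\sum_{k=0}^{n}S(n,k,\alpha,\beta,\gamma)\,(t-\gamma|\beta)_k$ in the variable $t$. The generalised exponential polynomials are $S_n(y;\alpha,\beta,r)=\sum_{k=0}^{n}S(n,k,\alpha,\beta,r)\,y^k$. For a nonnegative integer $\lambda$ put $\binom{k+\lambda-1}{k}=\lambda(\lambda+1)\cdots(\lambda+k-1)/k!$ (equal to $1$ for $k=0$). Define $$A^{\lambda,x}_n(\alpha,\beta,\gamma)=\sum_{k=0}^{n}\binom{k+\lambda-1}{k}(-1)^{n+k}\beta^k k!\,S(n,k,\alpha,-\beta,-\gamma)\,x^k .$$ *)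

theory Defs
  imports "HOL-Analysis.Analysis"
begin

definition gen_fact :: "real \<Rightarrow> real \<Rightarrow> nat \<Rightarrow> real" where
  "gen_fact t a n = (\<Prod>j<n. (t - real j * a))"

definition gen_stirling :: "nat \<Rightarrow> nat \<Rightarrow> real \<Rightarrow> real \<Rightarrow> real \<Rightarrow> real" where
  "gen_stirling n k a b g =
     (THE c. (\<forall>t. gen_fact t a n = (\<Sum>i=0..n. c i * gen_fact (t - g) b i))
             \<and> (\<forall>i>n. c i = 0)) k"

definition gen_exp_poly :: "nat \<Rightarrow> real \<Rightarrow> real \<Rightarrow> real \<Rightarrow> real \<Rightarrow> real" where
  "gen_exp_poly n y a b r = (\<Sum>k=0..n. gen_stirling n k a b r * y ^ k)"

text \<open>A^{lambda,x}_n(alpha,beta,gamma); binom(k+lambda-1,k) = lambda(lambda+1)...(lambda+k-1)/k!.\<close>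
definition A_poly :: "nat \<Rightarrow> nat \<Rightarrow> real \<Rightarrow> real \<Rightarrow> real \<Rightarrow> real \<Rightarrow> real" where
  "A_poly n lam x a b g =
     (\<Sum>k=0..n. (pochhammer (real lam) k / fact k) * (-1) ^ (n + k) * b ^ k * fact k
                 * gen_stirling n k a (-b) (-g) * x ^ k)"

end

theory Submission
  imports Defs "HOL-Probability.Sinc_Integral"
begin

text \<open>Expanding the exponential polynomial in powers of z turns the integral into a
  linear combination of the moments \<open>\<integral>\<^sub>0\<^sup>\<infinity> z^(\<lambda>-1+k) e^(-z) dz = (\<lambda>-1+k)!\<close>, and
  \<open>(\<lambda>-1+k)! / \<Gamma>(\<lambda>) = \<lambda>(\<lambda>+1)\<cdots>(\<lambda>+k-1)\<close>. The sign \<open>(-1)^k\<close> of \<open>(-\<beta>x)^k\<close>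
  and the prefactor \<open>(-1)^n\<close> combine to \<open>(-1)^(n+k)\<close>.\<close>

lemma pochhammer_of_nat_Suc:
  "pochhammer (of_nat (Suc m) :: 'a :: field_char_0) k = fact (m + k) / fact m"
proof (induction k)
  case 0
  then show ?case by simp
next
  case (Suc k)
  have "pochhammer (of_nat (Suc m) :: 'a) (Suc k) = (of_nat (Suc m) + of_nat k) * (fact (m + k) / fact m)"
    by (simp only: pochhammer_rec' Suc.IH)
  also have "\<dots> = fact (m + Suc k) / fact m"
    by simp
  finally show ?case .
qed

lemma set_integral_power_mult_polynomial_exp:
  fixes c :: "nat \<Rightarrow> real"
  shows "(LINT z:{0..}|lborel. z ^ m * (\<Sum>k\<in>A. c k * z ^ k) * exp (- z))
    = (\<Sum>k\<in>A. c k * fact (m + k))"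
proof -
  have "has_bochner_integral lborel
      (\<lambda>z. \<Sum>k\<in>A. c k * (z ^ (m + k) * exp (- z) * indicator {0..} z)) (\<Sum>k\<in>A. c k * fact (m + k))"
    by (intro has_bochner_integral_sum has_bochner_integral_mult_right
        has_bochner_integral_I0i_power_exp_m')
  moreover have "(\<lambda>z. indicator {0..} z *\<^sub>R (z ^ m * (\<Sum>k\<in>A. c k * z ^ k) * exp (- z)))
      = (\<lambda>z. \<Sum>k\<in>A. c k * (z ^ (m + k) * exp (- z) * indicator {0..} z))"
    by (simp add: sum_distrib_left sum_distrib_right power_add mult_ac)
  ultimately show ?thesis
    unfolding set_lebesgue_integral_def by (simp add: has_bochner_integral_integral_eq)
qed

theorem lemma3:
  fixes a b r x :: real and lam n :: nat
  assumes "lam > 0"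
  shows "A_poly n lam x a b r =
    (-1) ^ n / Gamma (real lam) *
    (LINT z:{0..}|lborel. z ^ (lam - 1) * gen_exp_poly n (- b * x * z) a (- b) (- r) * exp (- z))"
proof -
  define S where "S k = gen_stirling n k a (- b) (- r)" for k
  obtain m where lam: "lam = Suc m" using assms by (cases lam) auto
  have "z ^ (lam - 1) * gen_exp_poly n (- b * x * z) a (- b) (- r) * exp (- z)
      = z ^ m * (\<Sum>k=0..n. S k * (- b * x) ^ k * z ^ k) * exp (- z)" for z
    unfolding gen_exp_poly_def power_mult_distrib by (simp add: lam S_def mult_ac)
  then have integral: "(LINT z:{0..}|lborel.
        z ^ (lam - 1) * gen_exp_poly n (- b * x * z) a (- b) (- r) * exp (- z))
      = (\<Sum>k=0..n. S k * (- b * x) ^ k * fact (m + k))"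
    by (simp add: set_integral_power_mult_polynomial_exp)
  have "Gamma (real lam) = fact m"
    using Gamma_fact[of m] by (simp add: lam)
  moreover have "pochhammer (real lam) k = fact (m + k) / fact m" for k
    using pochhammer_of_nat_Suc[of m k] by (simp add: lam)
  ultimately show ?thesis
    unfolding integral A_poly_def sum_distrib_left
    by (intro sum.cong refl) (simp add: S_def power_add power_minus[of "b * x"] power_mult_distrib field_simps)
qed

end
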